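(* Let $(X,\Sigma)$ be a measurable space, $\mathcal{E}\subseteq\Sigma$ a paving, and $b\in(0,\infty)$. Let $\boldsymbol{\mu}=(\mu_t)_{t\ge0}$ be a family of monotone measures on $\Sigma$ with $\mu_t(X)=\mu_0(X)<\infty$ for all $t\ge0$, and let $\widehat{\boldsymbol{\mu}}=(\widehat{\mu}_t)_{t\ge0}$ be defined by $\widehat{\mu}_t(E)=\mu_0(X)-\mu_{(b-t)_+}(X\setminus E)$ for $t\ge0$, $E\in\Sigma$. Let $\mathscr{A}=\{\mathsf{A}_t(\cdot|E)\colon E\in\mathcal{E},\,t\ge0\}$ be a parametric family of conditional aggregation operators such that $\mathsf{A}_t(b\mathbf{1}_X|E)=b$ for every $t\ge0$ and every $E\in\mathcal{E}\setminus\{\emptyset\}$, and let $\widehat{\mathscr{A}}=\{\widehat{\mathsf{A}}_t(\cdot|E)\colon E\in\mathcal{E},\,t\ge0\}$ be given by $\widehat{\mathsf{A}}_t(f|E)=b-\mathsf{A}_{(b-t)_+}\big((b\mathbf{1}_X-f)_+\,\big|\,E\big)$ for $E\in\mathcal{E}\setminus\{\emptyset\}$ and $\widehat{\mathsf{A}}_t(\cdot|\emptyset)=0$. Then $$\boldsymbol{\mu}_{\mathscr{A}}(f,t)=\mu_0(X)-\widehat{\boldsymbol{\mu}}^S_{\widehat{\mathscr{A}}}(b\mathbf{1}_X-f,\,b-t)$$ for all $t\in[0,b]$ and all $f\in\mathbf{F}$ with $\sup_{x\in X}f(x)\le b$.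
   Context: $a_+=\max\{a,0\}$. $\mathbf{F}$ denotes the set of all $\Sigma$-measurable, nonnegative, bounded functions $f\colon X\to[0,\infty)$. A monotone measure is a map $\mu\colon\Sigma\to[0,\infty]$ with $\mu(B)\le\mu(C)$ whenever $B\subseteq C$, $\mu(\emptyset)=0$ and $\mu(X)>0$. A paving is a family $\mathcal{E}\subseteq\Sigma$ with $\emptyset\in\mathcal{E}$. For $E\in\Sigma\setminus\{\emptyset\}$, a conditional aggregation operator (CAO) w.r.t. $E$ is a map $\mathsf{A}(\cdot|E)\colon\mathbf{F}\to[0,\infty]$ such that (C1) $\mathsf{A}(f|E)\le\mathsf{A}(g|E)$ whenever $f(x)\le g(x)$ for all $x\in E$, and (C2) $\mathsf{A}(\mathbf{1}_{X\setminus E}|E)=0$. In $\mathscr{A}$, each $\mathsf{A}_t(\cdot|E)$ with $E\ne\emptyset$ is a CAO w.r.t. $E$ and $\mathsf{A}_t(\cdot|\emptyset)=\infty$. The generalized level measure is $\boldsymbol{\mu}_{\mathscr{A}}(f,t)=\sup\{\mu_t(E)\colon \mathsf{A}_t(f|E)\ge t,\ E\in\mathcal{E}\}$. The generalized survival function of $g\in\mathbf{F}$ w.r.t. $\widehat{\mathscr{A}}$ and $\widehat{\boldsymbol{\mu}}$ is $\widehat{\boldsymbol{\mu}}^S_{\widehat{\mathscr{A}}}(g,s)=\inf\{\widehat{\mu}_s(X\setminus E)\colon \widehat{\mathsf{A}}_s(g|E)\le s,\ E\in\mathcal{E}\}$ for $s\ge0$. *)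

theory Defs
  imports "HOL-Analysis.Analysis"
begin

text \<open>Values in [0,\<infinity>] are modelled in ereal (nonnegativity imposed explicitly).
  The measurable space (X,\<Sigma>) is (space M, sets M).\<close>

definition Fset :: "'a measure \<Rightarrow> ('a \<Rightarrow> real) set" where
  "Fset M = {f. f \<in> borel_measurable M \<and> (\<forall>x\<in>space M. 0 \<le> f x)
                 \<and> (\<exists>c. \<forall>x\<in>space M. f x \<le> c)}"

definition monotone_measure :: "'a measure \<Rightarrow> ('a set \<Rightarrow> ereal) \<Rightarrow> bool" where
  "monotone_measure M \<mu> \<longleftrightarrow>
     (\<forall>B\<in>sets M. 0 \<le> \<mu> B) \<and>
     (\<forall>B\<in>sets M. \<forall>C\<in>sets M. B \<subseteq> C \<longrightarrow> \<mu> B \<le> \<mu> C) \<and>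
     \<mu> {} = 0 \<and> \<mu> (space M) > 0"

definition paving :: "'a measure \<Rightarrow> 'a set set \<Rightarrow> bool" where
  "paving M \<E> \<longleftrightarrow> \<E> \<subseteq> sets M \<and> {} \<in> \<E>"

definition CAO :: "'a measure \<Rightarrow> 'a set \<Rightarrow> (('a \<Rightarrow> real) \<Rightarrow> ereal) \<Rightarrow> bool" where
  "CAO M E A \<longleftrightarrow>
     (\<forall>f\<in>Fset M. 0 \<le> A f) \<and>
     (\<forall>f\<in>Fset M. \<forall>g\<in>Fset M. (\<forall>x\<in>E. f x \<le> g x) \<longrightarrow> A f \<le> A g) \<and>
     A (indicator (space M - E)) = 0"

definition param_CAO_family ::
    "'a measure \<Rightarrow> 'a set set \<Rightarrow> (real \<Rightarrow> 'a set \<Rightarrow> ('a \<Rightarrow> real) \<Rightarrow> ereal) \<Rightarrow> bool" where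
  "param_CAO_family M \<E> A \<longleftrightarrow>
     (\<forall>t\<ge>0. \<forall>E\<in>\<E>. E \<noteq> {} \<longrightarrow> CAO M E (A t E)) \<and>
     (\<forall>t\<ge>0. \<forall>f. A t {} f = \<infinity>)"

definition gen_level_measure ::
    "'a set set \<Rightarrow> (real \<Rightarrow> 'a set \<Rightarrow> ereal) \<Rightarrow> (real \<Rightarrow> 'a set \<Rightarrow> ('a \<Rightarrow> real) \<Rightarrow> ereal)
     \<Rightarrow> ('a \<Rightarrow> real) \<Rightarrow> real \<Rightarrow> ereal" where
  "gen_level_measure \<E> \<mu> A f t = Sup {\<mu> t E | E. E \<in> \<E> \<and> A t E f \<ge> ereal t}"

definition gen_survival ::
    "'a measure \<Rightarrow> 'a set set \<Rightarrow> (real \<Rightarrow> 'a set \<Rightarrow> ereal) \<Rightarrow> (real \<Rightarrow> 'a set \<Rightarrow> ('a \<Rightarrow> real) \<Rightarrow> ereal)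
     \<Rightarrow> ('a \<Rightarrow> real) \<Rightarrow> real \<Rightarrow> ereal" where
  "gen_survival M \<E> \<mu> A g s = Inf {\<mu> s (space M - E) | E. E \<in> \<E> \<and> A s E g \<le> ereal s}"

definition hat_mu :: "'a measure \<Rightarrow> real \<Rightarrow> (real \<Rightarrow> 'a set \<Rightarrow> ereal) \<Rightarrow> real \<Rightarrow> 'a set \<Rightarrow> ereal" where
  "hat_mu M b \<mu> t E = \<mu> 0 (space M) - \<mu> (max (b - t) 0) (space M - E)"

definition hat_A :: "'a measure \<Rightarrow> real \<Rightarrow> (real \<Rightarrow> 'a set \<Rightarrow> ('a \<Rightarrow> real) \<Rightarrow> ereal)
     \<Rightarrow> real \<Rightarrow> 'a set \<Rightarrow> ('a \<Rightarrow> real) \<Rightarrow> ereal" where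
  "hat_A M b A t E f = (if E = {} then 0
      else ereal b - A (max (b - t) 0) E (\<lambda>x. max (b * indicator (space M) x - f x) 0))"

end

theory Submission
  imports Defs
begin

(* With s = b - t, the reflected operator satisfies Ahat_s(b 1_X - f | E) <= s iff A_t(f | E) >= t,
   because (b 1_X - (b 1_X - f))_+ agrees with f on E, and muhat_s(X - E) = mu_0(X) - mu_t(E).
   So the survival function is the infimum of mu_0(X) - mu_t(E) over exactly the sets E defining
   the level measure, and subtracting it from the finite mu_0(X) turns this Inf into the Sup. *)

lemma ereal_minus_minus_cancel:
  fixes c x :: ereal
  assumes "\<bar>c\<bar> \<noteq> \<infinity>"
  shows "c - (c - x) = x"
  using assms by (cases c; cases x) auto

lemma ereal_minus_INF_minus:
  fixes c :: ereal
  assumes "\<bar>c\<bar> \<noteq> \<infinity>"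
  shows "c - (INF i\<in>I. c - g i) = (SUP i\<in>I. g i)"
proof (cases "I = {}")
  case True
  then show ?thesis using assms by (cases c) (auto simp: top_ereal_def bot_ereal_def)
next
  case False
  then show ?thesis
    using assms by (simp add: INF_ereal_minus_right ereal_minus_minus_cancel)
qed

lemma ereal_minus_le_minus_iff:
  "ereal b - a \<le> ereal (b - t) \<longleftrightarrow> ereal t \<le> a"
  by (cases a) auto

lemma CAO_cong:
  assumes "CAO M E A" "f \<in> Fset M" "g \<in> Fset M" "\<forall>x\<in>E. f x = g x"
  shows "A f = A g"
  using assms unfolding CAO_def by (metis order_antisym order_refl)

lemma Fset_max_0: "f \<in> Fset M \<Longrightarrow> (\<lambda>x. max (f x) 0) \<in> Fset M"
  unfolding Fset_def by (auto intro!: borel_measurable_max)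

lemma gen_level_measure_eq_SUP:
  "gen_level_measure \<E> \<mu> A f t = (SUP E\<in>{E\<in>\<E>. ereal t \<le> A t E f}. \<mu> t E)"
  unfolding gen_level_measure_def by (simp add: setcompr_eq_image)

lemma gen_survival_eq_INF:
  "gen_survival M \<E> \<nu> B g s = (INF E\<in>{E\<in>\<E>. B s E g \<le> ereal s}. \<nu> s (space M - E))"
  unfolding gen_survival_def by (simp add: setcompr_eq_image)

lemma hat_mu_complement:
  assumes "E \<subseteq> space M" "0 \<le> t"
  shows "hat_mu M b \<mu> (b - t) (space M - E) = \<mu> 0 (space M) - \<mu> t E"
proof -
  have "space M - (space M - E) = E" using assms(1) by blast
  then show ?thesis using assms(2) unfolding hat_mu_def by simp
qed

lemma hat_A_reflect:
  assumes A: "param_CAO_family M \<E> A" and "\<E> \<subseteq> sets M" "E \<in> \<E>" "E \<noteq> {}"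
    and f: "f \<in> Fset M" and "0 \<le> t"
  shows "hat_A M b A (b - t) E (\<lambda>x. b * indicator (space M) x - f x) = ereal b - A t E f"
proof -
  have "CAO M E (A t E)" using A assms(3,4,6) unfolding param_CAO_family_def by blast
  moreover have "E \<subseteq> space M" using assms(2,3) sets.sets_into_space by blast
  then have "\<forall>x\<in>E. max (f x) 0 = f x" using f unfolding Fset_def by auto
  ultimately have "A t E (\<lambda>x. max (f x) 0) = A t E f"
    using CAO_cong Fset_max_0 f by blast
  then show ?thesis using assms(4,6) unfolding hat_A_def by simp
qed

lemma hat_A_le_iff:
  assumes A: "param_CAO_family M \<E> A" and "\<E> \<subseteq> sets M" "E \<in> \<E>"
    and "f \<in> Fset M" and "t \<in> {0..b}"
  shows "hat_A M b A (b - t) E (\<lambda>x. b * indicator (space M) x - f x) \<le> ereal (b - t)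
           \<longleftrightarrow> ereal t \<le> A t E f"
proof (cases "E = {}")
  case True
  have "A t {} f = \<infinity>" using A assms(5) unfolding param_CAO_family_def by simp
  then show ?thesis using True assms(5) unfolding hat_A_def by simp
next
  case False
  then show ?thesis
    using hat_A_reflect[OF assms(1-3) False assms(4)] assms(5) ereal_minus_le_minus_iff by simp
qed

theorem proposition3p23:
  fixes M :: "'a measure" and \<E> :: "'a set set" and b :: real
    and \<mu> :: "real \<Rightarrow> 'a set \<Rightarrow> ereal"
    and A :: "real \<Rightarrow> 'a set \<Rightarrow> ('a \<Rightarrow> real) \<Rightarrow> ereal"
  assumes "paving M \<E>"
    and "0 < b"
    and "\<forall>t\<ge>0. monotone_measure M (\<mu> t)"
    and "\<forall>t\<ge>0. \<mu> t (space M) = \<mu> 0 (space M)"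
    and "\<mu> 0 (space M) < \<infinity>"
    and "param_CAO_family M \<E> A"
    and "\<forall>t\<ge>0. \<forall>E\<in>\<E>. E \<noteq> {} \<longrightarrow> A t E (\<lambda>x. b * indicator (space M) x) = ereal b"
  shows "\<forall>t\<in>{0..b}. \<forall>f\<in>Fset M. (\<forall>x\<in>space M. f x \<le> b) \<longrightarrow>
           gen_level_measure \<E> \<mu> A f t =
             \<mu> 0 (space M) - gen_survival M \<E> (hat_mu M b \<mu>) (hat_A M b A)
                               (\<lambda>x. b * indicator (space M) x - f x) (b - t)"
proof (intro ballI impI)
  fix t f assume t: "t \<in> {0..b}" and f: "f \<in> Fset M"
  define m where "m = \<mu> 0 (space M)"
  have "0 < m" using assms(3) unfolding m_def monotone_measure_def by auto
  then have m_finite: "\<bar>m\<bar> \<noteq> \<infinity>" using assms(5) unfolding m_def by auto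
  have \<E>_sets: "\<E> \<subseteq> sets M" using assms(1) unfolding paving_def by blast
  let ?I = "{E\<in>\<E>. ereal t \<le> A t E f}"
  let ?g = "\<lambda>x. b * indicator (space M) x - f x"
  have "gen_level_measure \<E> \<mu> A f t = (SUP E\<in>?I. \<mu> t E)"
    by (rule gen_level_measure_eq_SUP)
  also have "\<dots> = m - (INF E\<in>?I. m - \<mu> t E)"
    by (rule ereal_minus_INF_minus[OF m_finite, symmetric])
  also have "(INF E\<in>?I. m - \<mu> t E) = gen_survival M \<E> (hat_mu M b \<mu>) (hat_A M b A) ?g (b - t)"
  proof (unfold gen_survival_eq_INF, rule INF_cong)
    show "?I = {E\<in>\<E>. hat_A M b A (b - t) E ?g \<le> ereal (b - t)}"
      using hat_A_le_iff[OF assms(6) \<E>_sets _ f t] by blast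
    show "m - \<mu> t E = hat_mu M b \<mu> (b - t) (space M - E)"
      if "E \<in> {E\<in>\<E>. hat_A M b A (b - t) E ?g \<le> ereal (b - t)}" for E
    proof -
      have "E \<subseteq> space M" using that \<E>_sets sets.sets_into_space by blast
      then show ?thesis using t unfolding m_def by (simp add: hat_mu_complement)
    qed
  qed
  finally show "gen_level_measure \<E> \<mu> A f t = \<mu> 0 (space M) - gen_survival M \<E> (hat_mu M b \<mu>)
      (hat_A M b A) ?g (b - t)"
    unfolding m_def .
qed

end
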